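(* (a) The cell $S_{s_1,s_1}$ is the disjoint union of exactly two $G$-orbits of points $(P,Ps_1,Ps_1n)$: $n=n(1,0,0)$, dimension $5$, stabilizer $\left\{\begin{pmatrix}a&0&y\\0&a&z\\0&0&1/a^2\end{pmatrix}:a\in\mathbb{R}^\times,y,z\in\mathbb{R}\right\}$; $n=n(0,0,0)$, dimension $4$, stabilizer $\left\{\begin{pmatrix}a&0&y\\0&b&z\\0&0&1/(ab)\end{pmatrix}:a,b\in\mathbb{R}^\times,y,z\in\mathbb{R}\right\}$. (b) The cell $S_{s_1,s_2}$ is a single $G$-orbit, that of $(P,Ps_1,Ps_2)$, of dimension $5$ with stabilizer $\left\{\begin{pmatrix}a&0&y\\0&b&0\\0&0&1/(ab)\end{pmatrix}:a,b\in\mathbb{R}^\times,y\in\mathbb{R}\right\}$. (c) The cell $S_{s_1,1}$ is a single $G$-orbit, that of $(P,Ps_1,P)$, of dimension $4$ with stabilizer $\left\{\begin{pmatrix}a&0&y\\0&b&z\\0&0&1/(ab)\end{pmatrix}:a,b\in\mathbb{R}^\times,y,z\in\mathbb{R}\right\}$. (d) The cell $S_{s_2,s_2}$ is the disjoint union of exactly two $G$-orbits of points $(P,Ps_2,Ps_2n)$: $n=n(0,0,1)$, dimension $5$, stabilizer $\left\{\begin{pmatrix}1/a^2&x&y\\0&a&0\\0&0&a\end{pmatrix}:a\in\mathbb{R}^\times,x,y\in\mathbb{R}\right\}$; $n=n(0,0,0)$, dimension $4$, stabilizer $\left\{\begin{pmatrix}a&x&y\\0&b&0\\0&0&1/(ab)\end{pmatrix}:a,b\in\mathbb{R}^\times,x,y\in\mathbb{R}\right\}$.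 (e) The cell $S_{s_2,1}$ is a single $G$-orbit, that of $(P,Ps_2,P)$, of dimension $4$ with stabilizer $\left\{\begin{pmatrix}a&x&y\\0&b&0\\0&0&1/(ab)\end{pmatrix}:a,b\in\mathbb{R}^\times,x,y\in\mathbb{R}\right\}$. (f) The cell $S_{1,1}$ is a single $G$-orbit of dimension $3$ with stabilizer $P$.
   Context: $G=\mathrm{SL}_3(\mathbb{R})$, $P$ the upper triangular matrices in $G$; $G$ acts on $X=(P\backslash G)^3$ by right multiplication in each coordinate. $n(x,y,z)=\begin{pmatrix}1&x&y\\0&1&z\\0&0&1\end{pmatrix}$. $1$ is the identity matrix, $s_1=\begin{pmatrix}0&1&0\\1&0&0\\0&0&-1\end{pmatrix}$, $s_2=\begin{pmatrix}-1&0&0\\0&0&1\\0&1&0\end{pmatrix}$. $S_{v,w}=\big(\{P\}\times P\backslash PvP\times P\backslash PwP\big)\cdot G$. The stabilizer of $(P,Pv,Pwn)$ is $P\cap v^{-1}Pv\cap (wn)^{-1}P(wn)$. *)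

theory Defs
  imports "HOL-Analysis.Analysis"
begin

type_synonym mat3 = "real^3^3"

text \<open>Rows/columns are indexed by the literals 1, 2, 3 of the numeral type 3.\<close>
definition mk3 :: "real \<Rightarrow> real \<Rightarrow> real \<Rightarrow> real \<Rightarrow> real \<Rightarrow> real \<Rightarrow> real \<Rightarrow> real \<Rightarrow> real \<Rightarrow> mat3" where
  "mk3 a11 a12 a13 a21 a22 a23 a31 a32 a33 =
     (\<chi> i j. if i = 1 then (if j = 1 then a11 else if j = 2 then a12 else a13)
             else if i = 2 then (if j = 1 then a21 else if j = 2 then a22 else a23)
             else (if j = 1 then a31 else if j = 2 then a32 else a33))"

definition SL3 :: "mat3 set" where
  "SL3 = {A. det A = 1}"

definition Pgrp :: "mat3 set" where
  "Pgrp = {A \<in> SL3. A $ 2 $ 1 = 0 \<and> A $ 3 $ 1 = 0 \<and> A $ 3 $ 2 = 0}"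

definition nmat :: "real \<Rightarrow> real \<Rightarrow> real \<Rightarrow> mat3" where
  "nmat x y z = mk3 1 x y 0 1 z 0 0 1"

definition s1 :: mat3 where "s1 = mk3 0 1 0 1 0 0 0 0 (-1)"
definition s2 :: mat3 where "s2 = mk3 (-1) 0 0 0 0 1 0 1 0"

definition Pcoset :: "mat3 \<Rightarrow> mat3 set" where
  "Pcoset g = {p ** g | p. p \<in> Pgrp}"

type_synonym point = "mat3 set \<times> mat3 set \<times> mat3 set"

text \<open>Right action of G on X = (P\G)^3.\<close>
definition act :: "point \<Rightarrow> mat3 \<Rightarrow> point" where
  "act x g = (case x of (C1, C2, C3) \<Rightarrow>
      ((\<lambda>c. c ** g) ` C1, (\<lambda>c. c ** g) ` C2, (\<lambda>c. c ** g) ` C3))"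

definition orbit :: "point \<Rightarrow> point set" where
  "orbit x = {act x g | g. g \<in> SL3}"

definition stab :: "point \<Rightarrow> mat3 set" where
  "stab x = {g \<in> SL3. act x g = x}"

definition pt :: "mat3 \<Rightarrow> mat3 \<Rightarrow> point" where
  "pt v w = (Pcoset (mat 1), Pcoset v, Pcoset w)"

text \<open>The cell S_{v,w} = ({P} x P\PvP x P\PwP) . G.\<close>
definition dcoset :: "mat3 \<Rightarrow> mat3 set" where
  "dcoset v = {p ** v ** q | p q. p \<in> Pgrp \<and> q \<in> Pgrp}"

definition cell :: "mat3 \<Rightarrow> mat3 \<Rightarrow> point set" where
  "cell v w = {act (Pcoset (mat 1), Pcoset x, Pcoset y) g | g x y.
                 g \<in> SL3 \<and> x \<in> dcoset v \<and> y \<in> dcoset w}"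

text \<open>Dimension of a (closed) matrix group: dimension of its tangent space at the identity
  (= its Lie algebra), i.e. the span of velocities of differentiable curves through 1 in H.\<close>
definition lie_dim :: "mat3 set \<Rightarrow> nat" where
  "lie_dim H = dim {v. \<exists>c :: real \<Rightarrow> mat3. c 0 = mat 1 \<and> (\<forall>t. c t \<in> H) \<and>
                          (c has_vector_derivative v) (at 0)}"

definition orbit_dim :: "point \<Rightarrow> nat" where
  "orbit_dim x = lie_dim SL3 - lie_dim (stab x)"

end

theory Submission
  imports Defs
begin

text \<open>
  A point of the cell \<open>S\<^sub>v\<^sub>,\<^sub>w\<close> is \<open>(P, P p\<^sub>1 v q\<^sub>1, P p\<^sub>2 w q\<^sub>2) g\<close>; translating by
  \<open>q\<^sub>1\<close> shows it is \<open>G\<close>-equivalent to \<open>(P, Pv, Pwr)\<close> with \<open>r = q\<^sub>2 q\<^sub>1\<^sup>-\<^sup>1 \<in> P\<close>. Right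
  translation by \<open>k \<in> P \<inter> v\<^sup>-\<^sup>1Pv\<close> fixes \<open>(P, Pv)\<close>, so \<open>(P, Pv, Pwr)\<close> lies in the orbit of
  \<open>(P, Pv, Pwq)\<close> as soon as \<open>wr \<in> P (wq) k\<close>; for upper triangular \<open>r\<close> such \<open>q\<close> and \<open>k\<close> are
  written down explicitly, and two representatives have disjoint orbits when no such \<open>k\<close>
  relates them. The stabilizer of \<open>(P, Pv, Pw)\<close> is \<open>P \<inter> v\<^sup>-\<^sup>1Pv \<inter> w\<^sup>-\<^sup>1Pw\<close>, computed
  entrywise. Its dimension is that of its tangent space at the identity: entries that are
  constant on the group have zero derivative, \<open>det = 1\<close> forces trace zero, and diagonal
  exponentials and elementary unipotent curves realise a basis of what remains.
\<close>

section \<open>Explicit 3 by 3 matrices\<close>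

lemma mk3_nth [simp]:
  "mk3 a11 a12 a13 a21 a22 a23 a31 a32 a33 $ 1 $ 1 = a11"
  "mk3 a11 a12 a13 a21 a22 a23 a31 a32 a33 $ 1 $ 2 = a12"
  "mk3 a11 a12 a13 a21 a22 a23 a31 a32 a33 $ 1 $ 3 = a13"
  "mk3 a11 a12 a13 a21 a22 a23 a31 a32 a33 $ 2 $ 1 = a21"
  "mk3 a11 a12 a13 a21 a22 a23 a31 a32 a33 $ 2 $ 2 = a22"
  "mk3 a11 a12 a13 a21 a22 a23 a31 a32 a33 $ 2 $ 3 = a23"
  "mk3 a11 a12 a13 a21 a22 a23 a31 a32 a33 $ 3 $ 1 = a31"
  "mk3 a11 a12 a13 a21 a22 a23 a31 a32 a33 $ 3 $ 2 = a32"
  "mk3 a11 a12 a13 a21 a22 a23 a31 a32 a33 $ 3 $ 3 = a33"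
  by (simp_all add: mk3_def)

lemma mk3_eta: "A = mk3 (A$1$1) (A$1$2) (A$1$3) (A$2$1) (A$2$2) (A$2$3) (A$3$1) (A$3$2) (A$3$3)"
  by (simp add: vec_eq_iff forall_3)

lemma mk3_eq_iff:
  "mk3 a11 a12 a13 a21 a22 a23 a31 a32 a33 = mk3 b11 b12 b13 b21 b22 b23 b31 b32 b33 \<longleftrightarrow>
   a11 = b11 \<and> a12 = b12 \<and> a13 = b13 \<and> a21 = b21 \<and> a22 = b22 \<and> a23 = b23 \<and>
   a31 = b31 \<and> a32 = b32 \<and> a33 = b33"
  by (simp add: vec_eq_iff forall_3)

lemma matrix_mul_mk3:
  "mk3 a11 a12 a13 a21 a22 a23 a31 a32 a33 ** mk3 b11 b12 b13 b21 b22 b23 b31 b32 b33 =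
   mk3 (a11*b11 + a12*b21 + a13*b31) (a11*b12 + a12*b22 + a13*b32) (a11*b13 + a12*b23 + a13*b33)
       (a21*b11 + a22*b21 + a23*b31) (a21*b12 + a22*b22 + a23*b32) (a21*b13 + a22*b23 + a23*b33)
       (a31*b11 + a32*b21 + a33*b31) (a31*b12 + a32*b22 + a33*b32) (a31*b13 + a32*b23 + a33*b33)"
  by (simp add: vec_eq_iff forall_3 matrix_matrix_mult_def sum_3)

lemma add_mk3:
  "mk3 a11 a12 a13 a21 a22 a23 a31 a32 a33 + mk3 b11 b12 b13 b21 b22 b23 b31 b32 b33 =
   mk3 (a11 + b11) (a12 + b12) (a13 + b13) (a21 + b21) (a22 + b22) (a23 + b23)
       (a31 + b31) (a32 + b32) (a33 + b33)"
  by (simp add: vec_eq_iff forall_3)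

lemma scaleR_mk3:
  "r *\<^sub>R mk3 a11 a12 a13 a21 a22 a23 a31 a32 a33 =
   mk3 (r*a11) (r*a12) (r*a13) (r*a21) (r*a22) (r*a23) (r*a31) (r*a32) (r*a33)"
  by (simp add: vec_eq_iff forall_3)

lemma mat_1_eq_mk3: "mat 1 = mk3 1 0 0 0 1 0 0 0 1"
  by (simp add: vec_eq_iff forall_3 mat_def)

lemma det_mk3:
  "det (mk3 a11 a12 a13 a21 a22 a23 a31 a32 a33) =
   a11*a22*a33 + a12*a23*a31 + a13*a21*a32 - a11*a23*a32 - a12*a21*a33 - a13*a22*a31"
  by (simp add: det_3)

lemma trace_mat3: "trace (A :: mat3) = A$1$1 + A$2$2 + A$3$3"
  by (simp add: trace_def sum_3)

section \<open>The groups G and P\<close>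

lemma SL3_mult: "g \<in> SL3 \<Longrightarrow> h \<in> SL3 \<Longrightarrow> g ** h \<in> SL3"
  by (simp add: SL3_def det_mul)

lemma SL3_inverse:
  assumes "g \<in> SL3"
  shows "\<exists>h\<in>SL3. g ** h = mat 1"
proof -
  have "invertible g"
    using assms by (simp add: SL3_def invertible_det_nz)
  then obtain h where h: "g ** h = mat 1"
    by (auto simp: invertible_right_inverse)
  then have "det g * det h = 1"
    by (metis det_I det_mul)
  with h assms show ?thesis
    by (auto simp: SL3_def)
qed

lemma mk3_in_Pgrp_iff:
  "mk3 a11 a12 a13 a21 a22 a23 a31 a32 a33 \<in> Pgrp \<longleftrightarrow>
   a21 = 0 \<and> a31 = 0 \<and> a32 = 0 \<and> a11 * a22 * a33 = 1"
  by (auto simp: Pgrp_def SL3_def det_mk3)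

lemma Pgrp_iff:
  "p \<in> Pgrp \<longleftrightarrow> (\<exists>a b x y z. p = mk3 a x y 0 b z 0 0 (1 / (a * b)) \<and> a \<noteq> 0 \<and> b \<noteq> 0)"
proof
  assume "p \<in> Pgrp"
  then have lower: "p$2$1 = 0" "p$3$1 = 0" "p$3$2 = 0" and "det p = 1"
    by (simp_all add: Pgrp_def SL3_def)
  then have diag: "p$1$1 * p$2$2 * p$3$3 = 1"
    by (simp add: det_3)
  then have "p$1$1 \<noteq> 0" "p$2$2 \<noteq> 0"
    by auto
  moreover have "p = mk3 (p$1$1) (p$1$2) (p$1$3) 0 (p$2$2) (p$2$3) 0 0 (1 / (p$1$1 * p$2$2))"
    using lower diag calculation
    by (subst mk3_eta) (simp add: mk3_eq_iff eq_divide_eq mult.commute mult.left_commute)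
  ultimately show "\<exists>a b x y z. p = mk3 a x y 0 b z 0 0 (1 / (a * b)) \<and> a \<noteq> 0 \<and> b \<noteq> 0"
    by (intro exI conjI)
qed (auto simp: mk3_in_Pgrp_iff)

lemma Pgrp_subset_SL3: "Pgrp \<subseteq> SL3"
  by (auto simp: Pgrp_def)

lemma mat_1_in_Pgrp: "mat 1 \<in> Pgrp"
  by (simp add: mat_1_eq_mk3 mk3_in_Pgrp_iff)

lemma nmat_in_Pgrp: "nmat x y z \<in> Pgrp"
  by (simp add: nmat_def mk3_in_Pgrp_iff)

lemma Pgrp_mult:
  assumes "p \<in> Pgrp" "q \<in> Pgrp"
  shows "p ** q \<in> Pgrp"
proof -
  have "det (p ** q) = 1"
    using assms by (simp add: Pgrp_def SL3_def det_mul)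
  moreover have "(p ** q)$2$1 = 0" "(p ** q)$3$1 = 0" "(p ** q)$3$2 = 0"
    using assms by (simp_all add: Pgrp_def matrix_matrix_mult_def sum_3)
  ultimately show ?thesis
    by (simp add: Pgrp_def SL3_def)
qed

lemma Pgrp_inverse: "p \<in> Pgrp \<Longrightarrow> \<exists>q\<in>Pgrp. q ** p = mat 1"
proof -
  assume "p \<in> Pgrp"
  then obtain a b x y z where p: "p = mk3 a x y 0 b z 0 0 (1 / (a * b))" and "a \<noteq> 0" "b \<noteq> 0"
    by (auto simp: Pgrp_iff)
  then have "mk3 (1/a) (-x/(a*b)) (x*z - b*y) 0 (1/b) (-a*z) 0 0 (a*b) ** p = mat 1"
    and "mk3 (1/a) (-x/(a*b)) (x*z - b*y) 0 (1/b) (-a*z) 0 0 (a*b) \<in> Pgrp"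
    by (simp_all add: matrix_mul_mk3 mat_1_eq_mk3 mk3_eq_iff mk3_in_Pgrp_iff field_simps)
  then show ?thesis
    by blast
qed

section \<open>Orbits and stabilizers\<close>

lemma Pcoset_eq_iff: "Pcoset a = Pcoset b \<longleftrightarrow> (\<exists>p\<in>Pgrp. a = p ** b)"
proof
  assume "Pcoset a = Pcoset b"
  moreover have "a \<in> Pcoset a"
    unfolding Pcoset_def using mat_1_in_Pgrp matrix_mul_lid[of a] by force
  ultimately show "\<exists>p\<in>Pgrp. a = p ** b"
    by (auto simp: Pcoset_def)
next
  assume "\<exists>p\<in>Pgrp. a = p ** b"
  then obtain p where p: "p \<in> Pgrp" "a = p ** b"
    by blast
  obtain p' where p': "p' \<in> Pgrp" "p' ** p = mat 1"
    using Pgrp_inverse[OF p(1)] by blast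
  have "q ** a \<in> Pcoset b" if "q \<in> Pgrp" for q
    using that p Pgrp_mult unfolding Pcoset_def by (force simp: matrix_mul_assoc)
  moreover have "q ** b \<in> Pcoset a" if "q \<in> Pgrp" for q
  proof -
    have "(q ** p') ** a = q ** ((p' ** p) ** b)"
      by (simp add: p(2) matrix_mul_assoc)
    then have "q ** b = (q ** p') ** a"
      by (simp add: p'(2))
    then show ?thesis
      using that p'(1) Pgrp_mult unfolding Pcoset_def by blast
  qed
  ultimately show "Pcoset a = Pcoset b"
    unfolding Pcoset_def by blast
qed

lemma Pcoset_eq_iff_right_inverse:
  assumes "v ** v' = mat 1"
  shows "Pcoset a = Pcoset v \<longleftrightarrow> a ** v' \<in> Pgrp"
proof -
  have "v' ** v = mat 1"
    using assms matrix_left_right_inverse by blast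
  then have "a = (a ** v') ** v"
    by (simp flip: matrix_mul_assoc)
  moreover have "a = p ** v \<Longrightarrow> a ** v' = p" for p
    using assms by (simp flip: matrix_mul_assoc)
  ultimately show ?thesis
    unfolding Pcoset_eq_iff by metis
qed

lemma Pcoset_eq_Pgrp_iff: "Pcoset g = Pcoset (mat 1) \<longleftrightarrow> g \<in> Pgrp"
  by (simp add: Pcoset_eq_iff_right_inverse)

lemma Pcoset_mult_left: "p \<in> Pgrp \<Longrightarrow> Pcoset (p ** a) = Pcoset a"
  by (auto simp: Pcoset_eq_iff)

lemma image_Pcoset: "(\<lambda>c. c ** g) ` Pcoset a = Pcoset (a ** g)"
  by (auto simp: Pcoset_def matrix_mul_assoc image_iff)

lemma act_mult: "act x (g ** h) = act (act x g) h"
  by (cases x) (simp add: act_def image_image matrix_mul_assoc)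

lemma act_one: "act x (mat 1) = x"
  by (cases x) (simp add: act_def)

lemma orbit_act:
  assumes "g \<in> SL3"
  shows "orbit (act x g) = orbit x"
proof
  show "orbit (act x g) \<subseteq> orbit x"
    using assms SL3_mult by (auto simp: orbit_def simp flip: act_mult)
  obtain g' where g': "g' \<in> SL3" "g ** g' = mat 1"
    using SL3_inverse[OF assms] by blast
  show "orbit x \<subseteq> orbit (act x g)"
  proof
    fix y
    assume "y \<in> orbit x"
    then obtain h where h: "h \<in> SL3" "y = act x h"
      by (auto simp: orbit_def)
    then have "y = act (act x g) (g' ** h)"
      by (metis act_mult g'(2) matrix_mul_lid)
    then show "y \<in> orbit (act x g)"
      using g'(1) h(1) SL3_mult unfolding orbit_def by blast
  qed
qed

lemma orbit_self: "x \<in> orbit x"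
  unfolding orbit_def SL3_def by (metis (mono_tags) act_one det_I mem_Collect_eq)

lemma orbit_eq_if_in_orbit: "z \<in> orbit x \<Longrightarrow> orbit z = orbit x"
proof -
  assume "z \<in> orbit x"
  then obtain g where "g \<in> SL3" "z = act x g"
    by (auto simp: orbit_def)
  then show ?thesis
    by (simp add: orbit_act)
qed

lemma orbit_eqI: "z \<in> orbit x \<Longrightarrow> z \<in> orbit y \<Longrightarrow> orbit x = orbit y"
  using orbit_eq_if_in_orbit by metis

lemma act_pt: "act (pt v u) g = (Pcoset g, Pcoset (v ** g), Pcoset (u ** g))"
  by (simp add: pt_def act_def image_Pcoset)

lemma stab_pt:
  assumes "v ** v' = mat 1" "w ** w' = mat 1"
  shows "stab (pt v w) = {g \<in> Pgrp. v ** g ** v' \<in> Pgrp \<and> w ** g ** w' \<in> Pgrp}"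
  using assms Pgrp_subset_SL3 unfolding stab_def act_pt
  by (auto simp: pt_def Pcoset_eq_Pgrp_iff Pcoset_eq_iff_right_inverse)

lemma cell_eq_Union_orbit_pt: "cell v w = (\<Union>r\<in>Pgrp. orbit (pt v (w ** r)))"
proof
  show "cell v w \<subseteq> (\<Union>r\<in>Pgrp. orbit (pt v (w ** r)))"
  proof
    fix x
    assume "x \<in> cell v w"
    then obtain g p1 q1 p2 q2
      where g: "g \<in> SL3" and pq: "p1 \<in> Pgrp" "q1 \<in> Pgrp" "p2 \<in> Pgrp" "q2 \<in> Pgrp"
      and x: "x = act (Pcoset (mat 1), Pcoset (p1 ** v ** q1), Pcoset (p2 ** w ** q2)) g"
      unfolding cell_def dcoset_def by blast
    obtain q1' where q1': "q1' \<in> Pgrp" "q1' ** q1 = mat 1"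
      using Pgrp_inverse[OF pq(2)] by blast
    define r where "r = q2 ** q1'"
    have "w ** r ** q1 = w ** q2"
      by (simp add: r_def q1'(2) flip: matrix_mul_assoc)
    moreover have "Pcoset (p1 ** v ** q1) = Pcoset (v ** q1)"
      and "Pcoset (p2 ** w ** q2) = Pcoset (w ** q2)"
      using pq by (simp_all add: Pcoset_mult_left flip: matrix_mul_assoc)
    moreover have "Pcoset q1 = Pcoset (mat 1)"
      using pq(2) by (simp add: Pcoset_eq_Pgrp_iff)
    ultimately have "x = act (act (pt v (w ** r)) q1) g"
      by (simp add: x act_pt)
    also have "\<dots> = act (pt v (w ** r)) (q1 ** g)"
      by (simp add: act_mult)
    finally show "x \<in> (\<Union>r\<in>Pgrp. orbit (pt v (w ** r)))"
      using r_def pq q1' g Pgrp_mult Pgrp_subset_SL3 SL3_mult unfolding orbit_def by blast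
  qed
  show "(\<Union>r\<in>Pgrp. orbit (pt v (w ** r))) \<subseteq> cell v w"
  proof clarify
    fix r x
    assume "r \<in> Pgrp" "x \<in> orbit (pt v (w ** r))"
    moreover have "v = mat 1 ** v ** mat 1" "w ** r = mat 1 ** w ** r"
      by simp_all
    ultimately show "x \<in> cell v w"
      using mat_1_in_Pgrp unfolding orbit_def cell_def dcoset_def pt_def by blast
  qed
qed

lemma orbit_pt_mult:
  assumes "p \<in> Pgrp" "k \<in> Pgrp" "Pcoset (v ** k) = Pcoset v"
  shows "orbit (pt v (p ** u ** k)) = orbit (pt v u)"
proof -
  have "Pcoset k = Pcoset (mat 1)"
    using assms(2) by (simp add: Pcoset_eq_Pgrp_iff)
  then have "pt v (p ** u ** k) = act (pt v u) k"
    using assms unfolding act_pt by (simp add: pt_def Pcoset_mult_left flip: matrix_mul_assoc)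
  moreover have "k \<in> SL3"
    using assms(2) Pgrp_subset_SL3 by blast
  ultimately show ?thesis
    by (simp add: orbit_act)
qed

lemma cell_eq_Union_orbit_reps:
  assumes "v ** v' = mat 1" "R \<subseteq> Pgrp"
    and reduce: "\<And>r. r \<in> Pgrp \<Longrightarrow>
      \<exists>q\<in>R. \<exists>p\<in>Pgrp. \<exists>k\<in>Pgrp. v ** k ** v' \<in> Pgrp \<and> w ** r = p ** (w ** q) ** k"
  shows "cell v w = (\<Union>q\<in>R. orbit (pt v (w ** q)))"
proof -
  have "orbit (pt v (w ** r)) \<subseteq> (\<Union>q\<in>R. orbit (pt v (w ** q)))" if "r \<in> Pgrp" for r
    using reduce[OF that] orbit_pt_mult Pcoset_eq_iff_right_inverse[OF assms(1)]
    by (metis UN_upper matrix_mul_assoc)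
  then show ?thesis
    using assms(2) unfolding cell_eq_Union_orbit_pt by blast
qed

lemma orbit_pt_disjoint:
  assumes "\<And>k p p'. k \<in> Pgrp \<Longrightarrow> p \<in> Pgrp \<Longrightarrow> p' \<in> Pgrp \<Longrightarrow>
      v ** k = p ** v \<Longrightarrow> u ** k = p' ** u' \<Longrightarrow> False"
  shows "orbit (pt v u) \<inter> orbit (pt v u') = {}"
proof (rule ccontr)
  assume "orbit (pt v u) \<inter> orbit (pt v u') \<noteq> {}"
  then have "pt v u' \<in> orbit (pt v u)"
    using orbit_eqI orbit_self by blast
  then obtain k where "Pcoset k = Pcoset (mat 1)" "Pcoset (v ** k) = Pcoset v"
      "Pcoset (u ** k) = Pcoset u'"
    unfolding orbit_def act_pt by (auto simp: pt_def)
  then show False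
    using assms by (auto simp: Pcoset_eq_Pgrp_iff Pcoset_eq_iff)
qed

section \<open>Tangent spaces\<close>

definition tangent_vectors :: "mat3 set \<Rightarrow> mat3 set" where
  "tangent_vectors H = {v. \<exists>c :: real \<Rightarrow> mat3. c 0 = mat 1 \<and> (\<forall>t. c t \<in> H) \<and>
                          (c has_vector_derivative v) (at 0)}"

lemma lie_dim_eq_dim_tangent_vectors: "lie_dim H = dim (tangent_vectors H)"
  by (simp add: lie_dim_def tangent_vectors_def)

lemma tangent_vectorI:
  "c 0 = mat 1 \<Longrightarrow> (\<And>t. c t \<in> H) \<Longrightarrow> (c has_vector_derivative v) (at 0) \<Longrightarrow>
   v \<in> tangent_vectors H"
  unfolding tangent_vectors_def by blast

lemma tangent_vectorE:
  assumes "v \<in> tangent_vectors H"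
  obtains c where "c 0 = mat 1" "\<And>t. c t \<in> H" "(c has_vector_derivative v) (at 0)"
  using assms unfolding tangent_vectors_def by blast

lemma tangent_vector_const_linear:
  fixes f :: "mat3 \<Rightarrow> 'b::real_normed_vector"
  assumes "bounded_linear f" "\<And>A. A \<in> H \<Longrightarrow> f A = y" "v \<in> tangent_vectors H"
  shows "f v = 0"
proof -
  obtain c where "c 0 = mat 1" and c: "\<And>t. c t \<in> H" "(c has_vector_derivative v) (at 0)"
    using tangent_vectorE[OF assms(3)] by metis
  have "((\<lambda>t. f (c t)) has_vector_derivative f v) (at 0)"
    using bounded_linear.has_vector_derivative[OF assms(1) c(2)] .
  moreover have "(\<lambda>t. f (c t)) = (\<lambda>t. y)"
    using assms(2) c(1) by auto
  ultimately show ?thesis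
    using vector_derivative_unique_at has_vector_derivative_const by metis
qed

lemma bounded_linear_entry: "bounded_linear (\<lambda>A :: real^'n^'m. A $ i $ j)"
  using bounded_linear_compose[OF bounded_linear_vec_nth[of j] bounded_linear_vec_nth[of i]]
  by (simp add: o_def)

lemma tangent_vector_entry_zero:
  assumes "\<And>A. A \<in> H \<Longrightarrow> A $ i $ j = 0" "v \<in> tangent_vectors H"
  shows "v $ i $ j = 0"
  by (rule tangent_vector_const_linear[OF bounded_linear_entry assms])

lemma tangent_vector_entry_eq:
  assumes "\<And>A. A \<in> H \<Longrightarrow> A $ i $ j = A $ k $ l" "v \<in> tangent_vectors H"
  shows "v $ i $ j = v $ k $ l"
proof -
  have "(\<lambda>A. A $ i $ j - A $ k $ l) v = 0"
    by (rule tangent_vector_const_linear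
        [OF bounded_linear_sub[OF bounded_linear_entry bounded_linear_entry]]) (use assms in auto)
  then show ?thesis
    by simp
qed

lemma has_vector_derivative_mk3:
  assumes "(f11 has_real_derivative d11) (at x within S)"
    "(f12 has_real_derivative d12) (at x within S)" "(f13 has_real_derivative d13) (at x within S)"
    "(f21 has_real_derivative d21) (at x within S)" "(f22 has_real_derivative d22) (at x within S)"
    "(f23 has_real_derivative d23) (at x within S)" "(f31 has_real_derivative d31) (at x within S)"
    "(f32 has_real_derivative d32) (at x within S)" "(f33 has_real_derivative d33) (at x within S)"
  shows "((\<lambda>t. mk3 (f11 t) (f12 t) (f13 t) (f21 t) (f22 t) (f23 t) (f31 t) (f32 t) (f33 t))
          has_vector_derivative mk3 d11 d12 d13 d21 d22 d23 d31 d32 d33) (at x within S)"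
proof -
  have mk3_sum: "mk3 a11 a12 a13 a21 a22 a23 a31 a32 a33 =
      a11 *\<^sub>R mk3 1 0 0 0 0 0 0 0 0 + a12 *\<^sub>R mk3 0 1 0 0 0 0 0 0 0 +
      a13 *\<^sub>R mk3 0 0 1 0 0 0 0 0 0 + a21 *\<^sub>R mk3 0 0 0 1 0 0 0 0 0 +
      a22 *\<^sub>R mk3 0 0 0 0 1 0 0 0 0 + a23 *\<^sub>R mk3 0 0 0 0 0 1 0 0 0 +
      a31 *\<^sub>R mk3 0 0 0 0 0 0 1 0 0 + a32 *\<^sub>R mk3 0 0 0 0 0 0 0 1 0 +
      a33 *\<^sub>R mk3 0 0 0 0 0 0 0 0 1"
    for a11 a12 a13 a21 a22 a23 a31 a32 a33
    by (simp add: vec_eq_iff forall_3)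
  show ?thesis
    apply (subst mk3_sum)
    apply (rule derivative_eq_intros has_vector_derivative_scaleR assms has_vector_derivative_const
        | simp)+
    apply (rule mk3_sum[symmetric])
    done
qed

lemma tangent_vector_trace:
  assumes "H \<subseteq> SL3" "v \<in> tangent_vectors H"
  shows "trace v = 0"
proof -
  obtain c where c: "c 0 = mat 1" "\<And>t. c t \<in> H" "(c has_vector_derivative v) (at 0)"
    using tangent_vectorE[OF assms(2)] by metis
  have entry: "((\<lambda>t. c t $ i $ j) has_real_derivative v $ i $ j) (at 0)" for i j
    using bounded_linear.has_vector_derivative[OF bounded_linear_entry c(3)]
    by (simp add: has_real_derivative_iff_has_vector_derivative)
  have "((\<lambda>t. det (c t)) has_real_derivative trace v) (at 0)"
    unfolding det_3 trace_mat3
    by (auto intro!: derivative_eq_intros entry simp: c(1) mat_1_eq_mk3)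
  moreover have "(\<lambda>t. det (c t)) = (\<lambda>t. 1)"
    using assms(1) c(2) by (auto simp: SL3_def)
  ultimately show ?thesis
    using DERIV_const DERIV_unique by metis
qed

lemma tangent_vector_unipotent:
  assumes "\<And>t. mat 1 + t *\<^sub>R E \<in> H"
  shows "E \<in> tangent_vectors H"
  by (rule tangent_vectorI[where c = "\<lambda>t. mat 1 + t *\<^sub>R E"])
    (auto intro!: assms derivative_eq_intros)

lemma tangent_vector_diagonal:
  assumes "\<And>t. mk3 (exp (a * t)) 0 0 0 (exp (b * t)) 0 0 0 (exp (c * t)) \<in> H"
  shows "mk3 a 0 0 0 b 0 0 0 c \<in> tangent_vectors H"
  by (rule tangent_vectorI[where c = "\<lambda>t. mk3 (exp (a * t)) 0 0 0 (exp (b * t)) 0 0 0 (exp (c * t))"])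
    (auto intro!: assms has_vector_derivative_mk3 derivative_eq_intros simp: mat_1_eq_mk3)

lemma lie_dim_eqI:
  fixes L :: "'a::euclidean_space \<Rightarrow> mat3"
  assumes "linear L" "inj L" "tangent_vectors H \<subseteq> range L" "L ` Basis \<subseteq> tangent_vectors H"
  shows "lie_dim H = DIM('a)"
proof -
  have "range L = span (L ` Basis)"
    using linear_span_image[OF assms(1), of Basis] by (simp add: span_Basis)
  also have "\<dots> \<subseteq> span (tangent_vectors H)"
    using assms(4) by (rule span_mono)
  finally have "range L \<subseteq> span (tangent_vectors H)" .
  moreover have "span (tangent_vectors H) \<subseteq> range L"
    using assms(3) linear_subspace_image[OF assms(1) subspace_UNIV] by (rule span_minimal)
  ultimately have "span (tangent_vectors H) = range L"
    by (rule antisym[rotated])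
  then have "lie_dim H = dim (range L)"
    by (metis dim_span lie_dim_eq_dim_tangent_vectors)
  also have "\<dots> = DIM('a)"
    using dim_image_eq[OF assms(1), of UNIV] assms(2) by (simp add: inj_on_def)
  finally show ?thesis .
qed

section \<open>The stabilizers\<close>

lemma s1_mult_s1: "s1 ** s1 = mat 1"
  by (simp add: s1_def matrix_mul_mk3 mat_1_eq_mk3)

lemma s2_mult_s2: "s2 ** s2 = mat 1"
  by (simp add: s2_def matrix_mul_mk3 mat_1_eq_mk3)

lemma nmat_zero: "nmat 0 0 0 = mat 1"
  by (simp add: nmat_def mat_1_eq_mk3)

lemma s1_nmat_right_inverse: "(s1 ** nmat 1 0 0) ** (nmat (-1) 0 0 ** s1) = mat 1"
  by (simp add: s1_def nmat_def matrix_mul_mk3 mat_1_eq_mk3)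

lemma s2_nmat_right_inverse: "(s2 ** nmat 0 0 1) ** (nmat 0 0 (-1) ** s2) = mat 1"
  by (simp add: s2_def nmat_def matrix_mul_mk3 mat_1_eq_mk3)

lemma stab_pt_eq_mk3:
  assumes "v ** v' = mat 1" "w ** w' = mat 1"
  shows "stab (pt v w) =
    {g. \<exists>a b x y z. g = mk3 a x y 0 b z 0 0 (1 / (a * b)) \<and> a \<noteq> 0 \<and> b \<noteq> 0 \<and>
                   v ** g ** v' \<in> Pgrp \<and> w ** g ** w' \<in> Pgrp}"
  unfolding stab_pt[OF assms] using Pgrp_iff by blast

lemma stab_pt_s1_one:
  "stab (pt s1 (mat 1)) = {mk3 a 0 y 0 b z 0 0 (1 / (a * b)) | a b y z. a \<noteq> 0 \<and> b \<noteq> 0}"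
  unfolding stab_pt_eq_mk3[OF s1_mult_s1 matrix_mul_lid]
  by (auto simp: s1_def matrix_mul_mk3 mk3_in_Pgrp_iff; blast)

lemma stab_pt_s1_s1n:
  "stab (pt s1 (s1 ** nmat 1 0 0)) = {mk3 a 0 y 0 a z 0 0 (1 / a^2) | a y z. a \<noteq> 0}"
  unfolding stab_pt_eq_mk3[OF s1_mult_s1 s1_nmat_right_inverse]
  by (auto simp: s1_def nmat_def matrix_mul_mk3 mk3_in_Pgrp_iff mk3_eq_iff power2_eq_square)

lemma stab_pt_s2_one:
  "stab (pt s2 (mat 1)) = {mk3 a x y 0 b 0 0 0 (1 / (a * b)) | a b x y. a \<noteq> 0 \<and> b \<noteq> 0}"
  unfolding stab_pt_eq_mk3[OF s2_mult_s2 matrix_mul_lid]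
  by (auto simp: s2_def matrix_mul_mk3 mk3_in_Pgrp_iff; blast)

lemma stab_pt_s1_s2:
  "stab (pt s1 s2) = {mk3 a 0 y 0 b 0 0 0 (1 / (a * b)) | a b y. a \<noteq> 0 \<and> b \<noteq> 0}"
  unfolding stab_pt_eq_mk3[OF s1_mult_s1 s2_mult_s2]
  by (auto simp: s1_def s2_def matrix_mul_mk3 mk3_in_Pgrp_iff; blast)

lemma stab_pt_s2_s2n:
  "stab (pt s2 (s2 ** nmat 0 0 1)) = {mk3 (1 / a^2) x y 0 a 0 0 0 a | a x y. a \<noteq> 0}"
  unfolding stab_pt_eq_mk3[OF s2_mult_s2 s2_nmat_right_inverse]
  by (auto simp: s2_def nmat_def matrix_mul_mk3 mk3_in_Pgrp_iff mk3_eq_iff power2_eq_square)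
    (simp add: field_simps)

lemma stab_pt_one_one: "stab (pt (mat 1) (mat 1)) = Pgrp"
  by (simp add: stab_pt[of "mat 1" "mat 1"])

lemma stab_pt_self: "v ** v' = mat 1 \<Longrightarrow> stab (pt v v) = stab (pt v (mat 1))"
  by (auto simp: stab_pt[of v v'])

section \<open>Dimensions of the stabilizers\<close>

lemma lie_dim_SL3: "lie_dim SL3 = 8"
proof -
  define L :: "real \<times> real \<times> real \<times> real \<times> real \<times> real \<times> real \<times> real \<Rightarrow> mat3"
    where "L = (\<lambda>(a, b, x12, x13, x21, x23, x31, x32).
                 mk3 a x12 x13 x21 b x23 x31 x32 (- a - b))"
  have "linear L"
    by (rule linearI) (auto simp: L_def add_mk3 scaleR_mk3 algebra_simps)
  moreover have "inj L"
    by (rule injI) (auto simp: L_def mk3_eq_iff)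
  moreover have "tangent_vectors SL3 \<subseteq> range L"
  proof
    fix v
    assume v: "v \<in> tangent_vectors SL3"
    have "trace v = 0"
      by (rule tangent_vector_trace[OF subset_refl v])
    then have "v = L (v$1$1, v$2$2, v$1$2, v$1$3, v$2$1, v$2$3, v$3$1, v$3$2)"
      by (subst mk3_eta) (simp add: L_def trace_mat3 mk3_eq_iff)
    then show "v \<in> range L"
      by blast
  qed
  moreover have "L ` Basis \<subseteq> tangent_vectors SL3"
  proof -
    have "mk3 1 0 0 0 0 0 0 0 (-1) \<in> tangent_vectors SL3"
      "mk3 0 0 0 0 1 0 0 0 (-1) \<in> tangent_vectors SL3"
      "mk3 0 1 0 0 0 0 0 0 0 \<in> tangent_vectors SL3"
      "mk3 0 0 1 0 0 0 0 0 0 \<in> tangent_vectors SL3"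
      "mk3 0 0 0 1 0 0 0 0 0 \<in> tangent_vectors SL3"
      "mk3 0 0 0 0 0 1 0 0 0 \<in> tangent_vectors SL3"
      "mk3 0 0 0 0 0 0 1 0 0 \<in> tangent_vectors SL3"
      "mk3 0 0 0 0 0 0 0 1 0 \<in> tangent_vectors SL3"
      by (rule tangent_vector_diagonal tangent_vector_unipotent;
          simp add: SL3_def det_mk3 mat_1_eq_mk3 add_mk3 scaleR_mk3 mk3_eq_iff exp_minus inverse_eq_divide)+
    then show ?thesis
      by (auto simp: L_def Basis_prod_def zero_prod_def)
  qed
  ultimately show ?thesis
    by (simp add: lie_dim_eqI)
qed

lemma orbit_dim_eq: "orbit_dim x = 8 - lie_dim (stab x)"
  by (simp add: orbit_dim_def lie_dim_SL3)

lemma lie_dim_Pgrp: "lie_dim Pgrp = 5"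
proof -
  define L :: "real \<times> real \<times> real \<times> real \<times> real \<Rightarrow> mat3"
    where "L = (\<lambda>(a, b, x, y, z). mk3 a x y 0 b z 0 0 (- a - b))"
  have "linear L"
    by (rule linearI) (auto simp: L_def add_mk3 scaleR_mk3 algebra_simps)
  moreover have "inj L"
    by (rule injI) (auto simp: L_def mk3_eq_iff)
  moreover have "tangent_vectors Pgrp \<subseteq> range L"
  proof
    fix v
    assume v: "v \<in> tangent_vectors Pgrp"
    have "v$2$1 = 0" "v$3$1 = 0" "v$3$2 = 0"
      by (auto simp: Pgrp_def intro!: tangent_vector_entry_zero[OF _ v])
    moreover have "trace v = 0"
      by (rule tangent_vector_trace[OF Pgrp_subset_SL3 v])
    ultimately have "v = L (v$1$1, v$2$2, v$1$2, v$1$3, v$2$3)"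
      by (subst mk3_eta) (simp add: L_def trace_mat3 mk3_eq_iff)
    then show "v \<in> range L"
      by blast
  qed
  moreover have "L ` Basis \<subseteq> tangent_vectors Pgrp"
  proof -
    have "mk3 1 0 0 0 0 0 0 0 (-1) \<in> tangent_vectors Pgrp"
      "mk3 0 0 0 0 1 0 0 0 (-1) \<in> tangent_vectors Pgrp"
      "mk3 0 1 0 0 0 0 0 0 0 \<in> tangent_vectors Pgrp"
      "mk3 0 0 1 0 0 0 0 0 0 \<in> tangent_vectors Pgrp"
      "mk3 0 0 0 0 0 1 0 0 0 \<in> tangent_vectors Pgrp"
      by (rule tangent_vector_diagonal tangent_vector_unipotent;
          simp add: mk3_in_Pgrp_iff mat_1_eq_mk3 add_mk3 scaleR_mk3 mk3_eq_iff exp_minus inverse_eq_divide)+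
    then show ?thesis
      by (auto simp: L_def Basis_prod_def zero_prod_def)
  qed
  ultimately show ?thesis
    by (simp add: lie_dim_eqI)
qed

lemma lie_dim_stab_pt_s1_one: "lie_dim (stab (pt s1 (mat 1))) = 4"
proof -
  define H where "H = stab (pt s1 (mat 1))"
  define L :: "real \<times> real \<times> real \<times> real \<Rightarrow> mat3"
    where "L = (\<lambda>(a, b, y, z). mk3 a 0 y 0 b z 0 0 (- a - b))"
  note H_eq = H_def[unfolded stab_pt_s1_one]
  have "linear L"
    by (rule linearI) (auto simp: L_def add_mk3 scaleR_mk3 algebra_simps)
  moreover have "inj L"
    by (rule injI) (auto simp: L_def mk3_eq_iff)
  moreover have "tangent_vectors H \<subseteq> range L"
  proof
    fix v
    assume v: "v \<in> tangent_vectors H"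
    have "v$1$2 = 0" "v$2$1 = 0" "v$3$1 = 0" "v$3$2 = 0"
      by (auto simp: H_eq intro!: tangent_vector_entry_zero[OF _ v])
    moreover have "trace v = 0"
      by (rule tangent_vector_trace[OF _ v]) (auto simp: H_def stab_def)
    ultimately have "v = L (v$1$1, v$2$2, v$1$3, v$2$3)"
      by (subst mk3_eta) (simp add: L_def trace_mat3 mk3_eq_iff)
    then show "v \<in> range L"
      by blast
  qed
  moreover have "L ` Basis \<subseteq> tangent_vectors H"
  proof -
    have "mk3 1 0 0 0 0 0 0 0 (-1) \<in> tangent_vectors H"
      "mk3 0 0 0 0 1 0 0 0 (-1) \<in> tangent_vectors H"
      "mk3 0 0 1 0 0 0 0 0 0 \<in> tangent_vectors H"
      "mk3 0 0 0 0 0 1 0 0 0 \<in> tangent_vectors H"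
      by (rule tangent_vector_diagonal tangent_vector_unipotent;
          simp add: H_eq mat_1_eq_mk3 add_mk3 scaleR_mk3 mk3_eq_iff exp_minus inverse_eq_divide)+
    then show ?thesis
      by (auto simp: L_def Basis_prod_def zero_prod_def)
  qed
  ultimately show ?thesis
    unfolding H_def by (simp add: lie_dim_eqI)
qed

lemma lie_dim_stab_pt_s2_one: "lie_dim (stab (pt s2 (mat 1))) = 4"
proof -
  define H where "H = stab (pt s2 (mat 1))"
  define L :: "real \<times> real \<times> real \<times> real \<Rightarrow> mat3"
    where "L = (\<lambda>(a, b, x, y). mk3 a x y 0 b 0 0 0 (- a - b))"
  note H_eq = H_def[unfolded stab_pt_s2_one]
  have "linear L"
    by (rule linearI) (auto simp: L_def add_mk3 scaleR_mk3 algebra_simps)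
  moreover have "inj L"
    by (rule injI) (auto simp: L_def mk3_eq_iff)
  moreover have "tangent_vectors H \<subseteq> range L"
  proof
    fix v
    assume v: "v \<in> tangent_vectors H"
    have "v$2$1 = 0" "v$2$3 = 0" "v$3$1 = 0" "v$3$2 = 0"
      by (auto simp: H_eq intro!: tangent_vector_entry_zero[OF _ v])
    moreover have "trace v = 0"
      by (rule tangent_vector_trace[OF _ v]) (auto simp: H_def stab_def)
    ultimately have "v = L (v$1$1, v$2$2, v$1$2, v$1$3)"
      by (subst mk3_eta) (simp add: L_def trace_mat3 mk3_eq_iff)
    then show "v \<in> range L"
      by blast
  qed
  moreover have "L ` Basis \<subseteq> tangent_vectors H"
  proof -
    have "mk3 1 0 0 0 0 0 0 0 (-1) \<in> tangent_vectors H"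
      "mk3 0 0 0 0 1 0 0 0 (-1) \<in> tangent_vectors H"
      "mk3 0 1 0 0 0 0 0 0 0 \<in> tangent_vectors H"
      "mk3 0 0 1 0 0 0 0 0 0 \<in> tangent_vectors H"
      by (rule tangent_vector_diagonal tangent_vector_unipotent;
          simp add: H_eq mat_1_eq_mk3 add_mk3 scaleR_mk3 mk3_eq_iff exp_minus inverse_eq_divide)+
    then show ?thesis
      by (auto simp: L_def Basis_prod_def zero_prod_def)
  qed
  ultimately show ?thesis
    unfolding H_def by (simp add: lie_dim_eqI)
qed

lemma lie_dim_stab_pt_s1_s2: "lie_dim (stab (pt s1 s2)) = 3"
proof -
  define H where "H = stab (pt s1 s2)"
  define L :: "real \<times> real \<times> real \<Rightarrow> mat3"
    where "L = (\<lambda>(a, b, y). mk3 a 0 y 0 b 0 0 0 (- a - b))"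
  note H_eq = H_def[unfolded stab_pt_s1_s2]
  have "linear L"
    by (rule linearI) (auto simp: L_def add_mk3 scaleR_mk3 algebra_simps)
  moreover have "inj L"
    by (rule injI) (auto simp: L_def mk3_eq_iff)
  moreover have "tangent_vectors H \<subseteq> range L"
  proof
    fix v
    assume v: "v \<in> tangent_vectors H"
    have "v$1$2 = 0" "v$2$1 = 0" "v$2$3 = 0" "v$3$1 = 0" "v$3$2 = 0"
      by (auto simp: H_eq intro!: tangent_vector_entry_zero[OF _ v])
    moreover have "trace v = 0"
      by (rule tangent_vector_trace[OF _ v]) (auto simp: H_def stab_def)
    ultimately have "v = L (v$1$1, v$2$2, v$1$3)"
      by (subst mk3_eta) (simp add: L_def trace_mat3 mk3_eq_iff)
    then show "v \<in> range L"
      by blast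
  qed
  moreover have "L ` Basis \<subseteq> tangent_vectors H"
  proof -
    have "mk3 1 0 0 0 0 0 0 0 (-1) \<in> tangent_vectors H"
      "mk3 0 0 0 0 1 0 0 0 (-1) \<in> tangent_vectors H"
      "mk3 0 0 1 0 0 0 0 0 0 \<in> tangent_vectors H"
      by (rule tangent_vector_diagonal tangent_vector_unipotent;
          simp add: H_eq mat_1_eq_mk3 add_mk3 scaleR_mk3 mk3_eq_iff exp_minus inverse_eq_divide)+
    then show ?thesis
      by (auto simp: L_def Basis_prod_def zero_prod_def)
  qed
  ultimately show ?thesis
    unfolding H_def by (simp add: lie_dim_eqI)
qed

lemma lie_dim_stab_pt_s1_s1n: "lie_dim (stab (pt s1 (s1 ** nmat 1 0 0))) = 3"
proof -
  define H where "H = stab (pt s1 (s1 ** nmat 1 0 0))"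
  define L :: "real \<times> real \<times> real \<Rightarrow> mat3"
    where "L = (\<lambda>(a, y, z). mk3 a 0 y 0 a z 0 0 (-2 * a))"
  note H_eq = H_def[unfolded stab_pt_s1_s1n]
  have "linear L"
    by (rule linearI) (auto simp: L_def add_mk3 scaleR_mk3 algebra_simps)
  moreover have "inj L"
    by (rule injI) (auto simp: L_def mk3_eq_iff)
  moreover have "tangent_vectors H \<subseteq> range L"
  proof
    fix v
    assume v: "v \<in> tangent_vectors H"
    have "v$1$2 = 0" "v$2$1 = 0" "v$3$1 = 0" "v$3$2 = 0"
      by (auto simp: H_eq intro!: tangent_vector_entry_zero[OF _ v])
    moreover have "v$1$1 = v$2$2"
      by (auto simp: H_eq intro!: tangent_vector_entry_eq[OF _ v])
    moreover have "trace v = 0"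
      by (rule tangent_vector_trace[OF _ v]) (auto simp: H_def stab_def)
    ultimately have "v = L (v$1$1, v$1$3, v$2$3)"
      by (subst mk3_eta) (simp add: L_def trace_mat3 mk3_eq_iff)
    then show "v \<in> range L"
      by blast
  qed
  moreover have "L ` Basis \<subseteq> tangent_vectors H"
  proof -
    have "mk3 1 0 0 0 1 0 0 0 (-2) \<in> tangent_vectors H"
      "mk3 0 0 1 0 0 0 0 0 0 \<in> tangent_vectors H"
      "mk3 0 0 0 0 0 1 0 0 0 \<in> tangent_vectors H"
      by (rule tangent_vector_diagonal tangent_vector_unipotent;
          simp add: H_eq mat_1_eq_mk3 add_mk3 scaleR_mk3 mk3_eq_iff exp_minus inverse_eq_divide exp_double)+
    then show ?thesis
      by (auto simp: L_def Basis_prod_def zero_prod_def)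
  qed
  ultimately show ?thesis
    unfolding H_def by (simp add: lie_dim_eqI)
qed

lemma lie_dim_stab_pt_s2_s2n: "lie_dim (stab (pt s2 (s2 ** nmat 0 0 1))) = 3"
proof -
  define H where "H = stab (pt s2 (s2 ** nmat 0 0 1))"
  define L :: "real \<times> real \<times> real \<Rightarrow> mat3"
    where "L = (\<lambda>(a, x, y). mk3 (-2 * a) x y 0 a 0 0 0 a)"
  note H_eq = H_def[unfolded stab_pt_s2_s2n]
  have "linear L"
    by (rule linearI) (auto simp: L_def add_mk3 scaleR_mk3 algebra_simps)
  moreover have "inj L"
    by (rule injI) (auto simp: L_def mk3_eq_iff)
  moreover have "tangent_vectors H \<subseteq> range L"
  proof
    fix v
    assume v: "v \<in> tangent_vectors H"
    have "v$2$1 = 0" "v$2$3 = 0" "v$3$1 = 0" "v$3$2 = 0"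
      by (auto simp: H_eq intro!: tangent_vector_entry_zero[OF _ v])
    moreover have "v$2$2 = v$3$3"
      by (auto simp: H_eq intro!: tangent_vector_entry_eq[OF _ v])
    moreover have "trace v = 0"
      by (rule tangent_vector_trace[OF _ v]) (auto simp: H_def stab_def)
    ultimately have "v = L (v$2$2, v$1$2, v$1$3)"
      by (subst mk3_eta) (simp add: L_def trace_mat3 mk3_eq_iff)
    then show "v \<in> range L"
      by blast
  qed
  moreover have "L ` Basis \<subseteq> tangent_vectors H"
  proof -
    have "mk3 (-2) 0 0 0 1 0 0 0 1 \<in> tangent_vectors H"
      "mk3 0 1 0 0 0 0 0 0 0 \<in> tangent_vectors H"
      "mk3 0 0 1 0 0 0 0 0 0 \<in> tangent_vectors H"
      by (rule tangent_vector_diagonal tangent_vector_unipotent;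
          simp add: H_eq mat_1_eq_mk3 add_mk3 scaleR_mk3 mk3_eq_iff exp_minus inverse_eq_divide exp_double)+
    then show ?thesis
      by (auto simp: L_def Basis_prod_def zero_prod_def)
  qed
  ultimately show ?thesis
    unfolding H_def by (simp add: lie_dim_eqI)
qed

section \<open>The cells\<close>

lemma cell_one:
  assumes "v ** v' = mat 1"
  shows "cell v (mat 1) = orbit (pt v (mat 1))"
proof -
  have "cell v (mat 1) = (\<Union>q\<in>{mat 1}. orbit (pt v (mat 1 ** q)))"
  proof (rule cell_eq_Union_orbit_reps[OF assms])
    fix r
    assume "r \<in> Pgrp"
    moreover have "v ** mat 1 ** v' \<in> Pgrp" "mat 1 ** r = r ** (mat 1 ** mat 1) ** mat 1"
      using assms mat_1_in_Pgrp by simp_all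
    ultimately show "\<exists>q\<in>{mat 1}. \<exists>p\<in>Pgrp. \<exists>k\<in>Pgrp.
        v ** k ** v' \<in> Pgrp \<and> mat 1 ** r = p ** (mat 1 ** q) ** k"
      using mat_1_in_Pgrp by blast
  qed (simp add: mat_1_in_Pgrp)
  then show ?thesis
    by simp
qed

lemma cell_s1_s2: "cell s1 s2 = orbit (pt s1 s2)"
proof -
  have "cell s1 s2 = (\<Union>q\<in>{mat 1}. orbit (pt s1 (s2 ** q)))"
  proof (rule cell_eq_Union_orbit_reps[OF s1_mult_s1])
    fix r
    assume "r \<in> Pgrp"
    then obtain a b x y z where r: "r = mk3 a x y 0 b z 0 0 (1 / (a * b))" "a \<noteq> 0" "b \<noteq> 0"
      by (auto simp: Pgrp_iff)
    define k where "k = mk3 a 0 0 0 b z 0 0 (1 / (a * b))"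
    define p where "p = mk3 1 (- ((y - x * z / b) * (a * b))) (- x / b) 0 1 0 0 0 1"
    have "k \<in> Pgrp" "s1 ** k ** s1 \<in> Pgrp" "p \<in> Pgrp"
      using r by (simp_all add: k_def p_def s1_def matrix_mul_mk3 mk3_in_Pgrp_iff)
    moreover have "s2 ** r = p ** (s2 ** mat 1) ** k"
      using r by (simp add: k_def p_def s2_def matrix_mul_mk3 mk3_eq_iff field_simps)
    ultimately show "\<exists>q\<in>{mat 1}. \<exists>p\<in>Pgrp. \<exists>k\<in>Pgrp.
        s1 ** k ** s1 \<in> Pgrp \<and> s2 ** r = p ** (s2 ** q) ** k"
      by blast
  qed (simp add: mat_1_in_Pgrp)
  then show ?thesis
    by simp
qed

lemma cell_s1_s1: "cell s1 s1 = orbit (pt s1 (s1 ** nmat 1 0 0)) \<union> orbit (pt s1 (s1 ** nmat 0 0 0))"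
proof -
  have "cell s1 s1 = (\<Union>q\<in>{nmat 1 0 0, nmat 0 0 0}. orbit (pt s1 (s1 ** q)))"
  proof (rule cell_eq_Union_orbit_reps[OF s1_mult_s1])
    fix r
    assume "r \<in> Pgrp"
    then obtain a b x y z where r: "r = mk3 a x y 0 b z 0 0 (1 / (a * b))" "a \<noteq> 0" "b \<noteq> 0"
      by (auto simp: Pgrp_iff)
    show "\<exists>q\<in>{nmat 1 0 0, nmat 0 0 0}. \<exists>p\<in>Pgrp. \<exists>k\<in>Pgrp.
            s1 ** k ** s1 \<in> Pgrp \<and> s1 ** r = p ** (s1 ** q) ** k"
    proof (cases "x = 0")
      case True
      then have "s1 ** r ** s1 \<in> Pgrp"
        using r by (simp add: s1_def matrix_mul_mk3 mk3_in_Pgrp_iff)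
      moreover have "s1 ** r = mat 1 ** (s1 ** nmat 0 0 0) ** r"
        by (simp add: nmat_zero)
      ultimately show ?thesis
        using \<open>r \<in> Pgrp\<close> mat_1_in_Pgrp by blast
    next
      case False
      define k where "k = mk3 a 0 y 0 x 0 0 0 (1 / (a * x))"
      define p where "p = mk3 (b / x) 0 (- z * a * x) 0 1 0 0 0 (a * x / (a * b))"
      have "k \<in> Pgrp" "s1 ** k ** s1 \<in> Pgrp" "p \<in> Pgrp"
        using r False by (simp_all add: k_def p_def s1_def matrix_mul_mk3 mk3_in_Pgrp_iff)
      moreover have "s1 ** r = p ** (s1 ** nmat 1 0 0) ** k"
        using r False by (simp add: k_def p_def s1_def nmat_def matrix_mul_mk3 mk3_eq_iff)
      ultimately show ?thesis
        by blast
    qed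
  qed (simp add: nmat_in_Pgrp)
  then show ?thesis
    by simp
qed

lemma cell_s2_s2: "cell s2 s2 = orbit (pt s2 (s2 ** nmat 0 0 1)) \<union> orbit (pt s2 (s2 ** nmat 0 0 0))"
proof -
  have "cell s2 s2 = (\<Union>q\<in>{nmat 0 0 1, nmat 0 0 0}. orbit (pt s2 (s2 ** q)))"
  proof (rule cell_eq_Union_orbit_reps[OF s2_mult_s2])
    fix r
    assume "r \<in> Pgrp"
    then obtain a b x y z where r: "r = mk3 a x y 0 b z 0 0 (1 / (a * b))" "a \<noteq> 0" "b \<noteq> 0"
      by (auto simp: Pgrp_iff)
    show "\<exists>q\<in>{nmat 0 0 1, nmat 0 0 0}. \<exists>p\<in>Pgrp. \<exists>k\<in>Pgrp.
            s2 ** k ** s2 \<in> Pgrp \<and> s2 ** r = p ** (s2 ** q) ** k"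
    proof (cases "z = 0")
      case True
      then have "s2 ** r ** s2 \<in> Pgrp"
        using r by (simp add: s2_def matrix_mul_mk3 mk3_in_Pgrp_iff)
      moreover have "s2 ** r = mat 1 ** (s2 ** nmat 0 0 0) ** r"
        by (simp add: nmat_zero)
      ultimately show ?thesis
        using \<open>r \<in> Pgrp\<close> mat_1_in_Pgrp by blast
    next
      case False
      define k where "k = mk3 (1 / (b * z)) (x / (a * b * z)) (y / (a * b * z)) 0 b 0 0 0 z"
      define p where "p = mk3 (a * b * z) 0 0 0 (1 / (a * b * z)) 0 0 0 1"
      have "k \<in> Pgrp" "s2 ** k ** s2 \<in> Pgrp" "p \<in> Pgrp"
        using r False by (simp_all add: k_def p_def s2_def matrix_mul_mk3 mk3_in_Pgrp_iff)
      moreover have "s2 ** r = p ** (s2 ** nmat 0 0 1) ** k"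
        using r False by (simp add: k_def p_def s2_def nmat_def matrix_mul_mk3 mk3_eq_iff)
      ultimately show ?thesis
        by blast
    qed
  qed (simp add: nmat_in_Pgrp)
  then show ?thesis
    by simp
qed

lemma orbits_s1_s1_disjoint: "orbit (pt s1 (s1 ** nmat 1 0 0)) \<inter> orbit (pt s1 (s1 ** nmat 0 0 0)) = {}"
  by (rule orbit_pt_disjoint) (auto simp: Pgrp_iff s1_def nmat_def matrix_mul_mk3 mk3_eq_iff)

lemma orbits_s2_s2_disjoint: "orbit (pt s2 (s2 ** nmat 0 0 1)) \<inter> orbit (pt s2 (s2 ** nmat 0 0 0)) = {}"
  by (rule orbit_pt_disjoint) (auto simp: Pgrp_iff s2_def nmat_def matrix_mul_mk3 mk3_eq_iff)

theorem mainTheorem11: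
  shows
   "(cell s1 s1 = orbit (pt s1 (s1 ** nmat 1 0 0)) \<union> orbit (pt s1 (s1 ** nmat 0 0 0)) \<and>
     orbit (pt s1 (s1 ** nmat 1 0 0)) \<inter> orbit (pt s1 (s1 ** nmat 0 0 0)) = {} \<and>
     orbit_dim (pt s1 (s1 ** nmat 1 0 0)) = 5 \<and>
     stab (pt s1 (s1 ** nmat 1 0 0)) =
       {mk3 a 0 y 0 a z 0 0 (1 / a^2) | a y z. a \<noteq> 0} \<and>
     orbit_dim (pt s1 (s1 ** nmat 0 0 0)) = 4 \<and>
     stab (pt s1 (s1 ** nmat 0 0 0)) =
       {mk3 a 0 y 0 b z 0 0 (1 / (a * b)) | a b y z. a \<noteq> 0 \<and> b \<noteq> 0})
  \<and> (cell s1 s2 = orbit (pt s1 s2) \<and> orbit_dim (pt s1 s2) = 5 \<and>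
     stab (pt s1 s2) = {mk3 a 0 y 0 b 0 0 0 (1 / (a * b)) | a b y. a \<noteq> 0 \<and> b \<noteq> 0})
  \<and> (cell s1 (mat 1) = orbit (pt s1 (mat 1)) \<and> orbit_dim (pt s1 (mat 1)) = 4 \<and>
     stab (pt s1 (mat 1)) =
       {mk3 a 0 y 0 b z 0 0 (1 / (a * b)) | a b y z. a \<noteq> 0 \<and> b \<noteq> 0})
  \<and> (cell s2 s2 = orbit (pt s2 (s2 ** nmat 0 0 1)) \<union> orbit (pt s2 (s2 ** nmat 0 0 0)) \<and>
     orbit (pt s2 (s2 ** nmat 0 0 1)) \<inter> orbit (pt s2 (s2 ** nmat 0 0 0)) = {} \<and>
     orbit_dim (pt s2 (s2 ** nmat 0 0 1)) = 5 \<and>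
     stab (pt s2 (s2 ** nmat 0 0 1)) =
       {mk3 (1 / a^2) x y 0 a 0 0 0 a | a x y. a \<noteq> 0} \<and>
     orbit_dim (pt s2 (s2 ** nmat 0 0 0)) = 4 \<and>
     stab (pt s2 (s2 ** nmat 0 0 0)) =
       {mk3 a x y 0 b 0 0 0 (1 / (a * b)) | a b x y. a \<noteq> 0 \<and> b \<noteq> 0})
  \<and> (cell s2 (mat 1) = orbit (pt s2 (mat 1)) \<and> orbit_dim (pt s2 (mat 1)) = 4 \<and>
     stab (pt s2 (mat 1)) =
       {mk3 a x y 0 b 0 0 0 (1 / (a * b)) | a b x y. a \<noteq> 0 \<and> b \<noteq> 0})
  \<and> (cell (mat 1) (mat 1) = orbit (pt (mat 1) (mat 1)) \<and> orbit_dim (pt (mat 1) (mat 1)) = 3 \<and>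
     stab (pt (mat 1) (mat 1)) = Pgrp)"
proof -
  have stab_s1_s1: "stab (pt s1 (s1 ** nmat 0 0 0)) = stab (pt s1 (mat 1))"
    and stab_s2_s2: "stab (pt s2 (s2 ** nmat 0 0 0)) = stab (pt s2 (mat 1))"
    using stab_pt_self s1_mult_s1 s2_mult_s2 by (simp_all add: nmat_zero)
  show ?thesis
    unfolding orbit_dim_eq stab_s1_s1 stab_s2_s2 lie_dim_stab_pt_s1_s1n lie_dim_stab_pt_s1_one
      lie_dim_stab_pt_s1_s2 lie_dim_stab_pt_s2_s2n lie_dim_stab_pt_s2_one lie_dim_Pgrp
      stab_pt_one_one
    using cell_s1_s1 orbits_s1_s1_disjoint stab_pt_s1_s1n stab_pt_s1_one
      cell_s1_s2 stab_pt_s1_s2 cell_one[OF s1_mult_s1]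
      cell_s2_s2 orbits_s2_s2_disjoint stab_pt_s2_s2n stab_pt_s2_one cell_one[OF s2_mult_s2]
      cell_one[of "mat 1" "mat 1"]
    by simp
qed

end
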